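(* For every permutation $w\in S_n$, $\mathsf{rajcode}(w)=\mathsf{rajcode}(RD(w))$.
   Context: For $w\in S_n$, $\mathsf{Inv}(w)=\{(i,j):i<j,\ w(i)>w(j)\}$ and the Rothe diagram is $RD(w)=\{(r,w(r')):(r,r')\in\mathsf{Inv}(w)\}$. Let $\mathrm{LIS}^w(q)$ be the length of the longest increasing subsequence of the one-line notation of $w$ starting with $q$. $\mathsf{rajcode}(w)$ is the weak composition with $r$-th entry $n+1-r-\mathrm{LIS}^w(w(r))$ for $r\in[n]$ and $0$ for $r>n$. A diagram is a finite subset of $\mathbb{Z}_{>0}\times\mathbb{Z}_{>0}$; $(r,c)$ is in row $r$ (row 1 on top), column $c$. The snow diagram $\mathsf{snow}(D)$: iterate through the rows of $D$ from bottom to top; in row $r$, find the rightmost cell $(r,c)\in D$ such that column $c$ contains no dark cloud yet; if it exists, label it a dark cloud and add a snowflake cell at $(r',c)$ for each $r'<r$ with $(r',c)\notin D$. $\mathsf{rajcode}(D)$ is the weak composition whose $i$-th entry is the number of cells (original cells plus snowflakes) in row $i$ of $\mathsf{snow}(D)$. *)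

theory Defs
  imports "HOL-Combinatorics.Permutations"
begin

text \<open>Permutations of [n] are functions w :: nat => nat with  w permutes {1..n}.
  Weak compositions are functions nat => nat, entry i at index i (i >= 1).\<close>

definition inc_subseqs_from :: "nat \<Rightarrow> (nat \<Rightarrow> nat) \<Rightarrow> nat \<Rightarrow> nat set set" where
  "inc_subseqs_from n w q =
     {S. S \<subseteq> {1..n} \<and> strict_mono_on S w \<and> (\<exists>p\<in>S. w p = q \<and> (\<forall>i\<in>S. p \<le> i))}"

definition LIS :: "nat \<Rightarrow> (nat \<Rightarrow> nat) \<Rightarrow> nat \<Rightarrow> nat" where
  "LIS n w q = Max (card ` inc_subseqs_from n w q)"

definition rajcode_perm :: "nat \<Rightarrow> (nat \<Rightarrow> nat) \<Rightarrow> nat \<Rightarrow> nat" where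
  "rajcode_perm n w r = (if 1 \<le> r \<and> r \<le> n then n + 1 - r - LIS n w (w r) else 0)"

definition Inv :: "nat \<Rightarrow> (nat \<Rightarrow> nat) \<Rightarrow> (nat \<times> nat) set" where
  "Inv n w = {(i, j). 1 \<le> i \<and> i < j \<and> j \<le> n \<and> w i > w j}"

definition rothe_diagram :: "nat \<Rightarrow> (nat \<Rightarrow> nat) \<Rightarrow> (nat \<times> nat) set" where
  "rothe_diagram n w = {(r, w r') | r r'. (r, r') \<in> Inv n w}"

text \<open>State: (set of columns containing a dark cloud, set of snowflake cells).\<close>
definition snow_row :: "(nat \<times> nat) set \<Rightarrow> nat set \<times> (nat \<times> nat) set \<Rightarrow> nat
    \<Rightarrow> nat set \<times> (nat \<times> nat) set" where
  "snow_row D st r =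
     (let C = fst st; S = snd st; cand = {c. (r, c) \<in> D \<and> c \<notin> C} in
      if cand = {} then st
      else (let c = Max cand in
            (insert c C, S \<union> {(r', c) | r'. 1 \<le> r' \<and> r' < r \<and> (r', c) \<notin> D})))"

definition snowflakes :: "(nat \<times> nat) set \<Rightarrow> (nat \<times> nat) set" where
  "snowflakes D = snd (foldl (snow_row D) ({}, {}) (rev [1..<Suc (Max (insert 0 (fst ` D)))]))"

definition snow :: "(nat \<times> nat) set \<Rightarrow> (nat \<times> nat) set" where
  "snow D = D \<union> snowflakes D"

definition rajcode_diag :: "(nat \<times> nat) set \<Rightarrow> nat \<Rightarrow> nat" where
  "rajcode_diag D i = card {c. (i, c) \<in> snow D}"

end

theory Submission
  imports Defs
begin

text \<open>
  Write C_j for the set of columns carrying a dark cloud once rows n, ..., j of RD(w) have been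
  processed, and F_j = w{j..n} - C_j for the remaining free values. Row j of RD(w) consists of
  the values w(s) < w(j) with s > j, so the dark cloud of row j lands on the largest free value
  below w(j): F_j arises from F_{j+1} by inserting w(j) and bumping the largest smaller element.
  This is patience sorting read from right to left, and by induction the number of values of F_j
  above any threshold t is the length of a longest increasing subsequence of w(j) ... w(n) with
  all values above t.

  A snowflake sits at (i, c) exactly when (i, c) is not in RD(w) and column c receives its dark
  cloud in a row below i, so row i of snow(RD(w)) is row i of RD(w) together with C_{i+1}. Its
  complement in w{i+1..n} is the set of free values above w(i), of size LIS^w(w(i)) - 1.
\<close>

definition bump_below :: "'a::linorder set \<Rightarrow> 'a \<Rightarrow> 'a set" where
  "bump_below V x =
     (if {v\<in>V. v < x} = {} then insert x V else insert x V - {Max {v\<in>V. v < x}})"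

lemma card_above_bump_below:
  fixes V :: "'a::linorder set"
  assumes fin: "finite V" and x: "x \<notin> V"
  shows "card {v \<in> bump_below V x. t < v} =
    (if x \<le> t then card {v\<in>V. t < v} else max (card {v\<in>V. t < v}) (Suc (card {v\<in>V. x < v})))"
proof -
  let ?below = "{v\<in>V. v < x}"
  have fin_below: "finite ?below" using fin by simp
  have Max_below: "Max ?below \<in> V \<and> Max ?below < x" if "v \<in> V" "v < x" for v
  proof -
    have "?below \<noteq> {}" using that by auto
    then show ?thesis using Max_in[OF fin_below] by auto
  qed
  consider (low) "x \<le> t" | (gap) "t < x" "\<forall>v\<in>V. t < v \<longrightarrow> x < v"
    | (hit) u where "t < x" "u \<in> V" "t < u" "u < x"
    using x by (metis linorder_neqE not_le)
  then show ?thesis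
  proof cases
    case low
    then have "{v \<in> bump_below V x. t < v} = {v\<in>V. t < v}"
      using Max_below by (auto simp: bump_below_def; meson less_asym less_le_trans)
    then show ?thesis using low by simp
  next
    case gap
    then have "{v \<in> bump_below V x. t < v} = insert x {v\<in>V. x < v}"
      using Max_below by (auto simp: bump_below_def; meson less_asym)
    moreover have "{v\<in>V. t < v} = {v\<in>V. x < v}" using gap by auto
    ultimately show ?thesis using gap fin by simp
  next
    case hit
    let ?above = "{v\<in>V. t < v}" and ?m = "Max ?below"
    have "u \<le> ?m" using fin hit by (intro Max_ge) auto
    then have "t < ?m" using hit by (metis less_le_trans)
    then have m: "?m \<in> ?above" using Max_below[of u] hit by simp
    have "{v \<in> bump_below V x. t < v} = insert x (?above - {?m})"
      using hit Max_below by (auto simp: bump_below_def)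
    also have "card \<dots> = Suc (card (?above - {?m}))"
      using fin x by (intro card_insert_disjoint) auto
    also have "\<dots> = card ?above"
      using fin m by (intro card_Suc_Diff1) auto
    finally have "card {v \<in> bump_below V x. t < v} = card ?above" .
    moreover have "card {v\<in>V. x < v} \<le> card (?above - {u})"
      using fin hit by (intro card_mono) auto
    moreover have "card (?above - {u}) < card ?above"
      using fin hit by (intro card_Diff1_less) auto
    ultimately show ?thesis using hit by simp
  qed
qed

definition inc_subseqs_above :: "nat \<Rightarrow> (nat \<Rightarrow> nat) \<Rightarrow> nat \<Rightarrow> nat \<Rightarrow> nat set set" where
  "inc_subseqs_above n w j t = {S. S \<subseteq> {j..n} \<and> strict_mono_on S w \<and> (\<forall>i\<in>S. t < w i)}"

definition lis_above :: "nat \<Rightarrow> (nat \<Rightarrow> nat) \<Rightarrow> nat \<Rightarrow> nat \<Rightarrow> nat" where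
  "lis_above n w j t = Max (card ` inc_subseqs_above n w j t)"

lemma finite_inc_subseqs_above: "finite (inc_subseqs_above n w j t)"
  by (rule finite_subset[of _ "Pow {j..n}"]) (auto simp: inc_subseqs_above_def)

lemma empty_in_inc_subseqs_above: "{} \<in> inc_subseqs_above n w j t"
  by (simp add: inc_subseqs_above_def strict_mono_on_def monotone_on_def)

lemma inc_subseqs_above_nonempty: "inc_subseqs_above n w j t \<noteq> {}"
  using empty_in_inc_subseqs_above by blast

lemma lis_above_beyond: "n < j \<Longrightarrow> lis_above n w j t = 0"
  using empty_in_inc_subseqs_above[of n w j t]
  by (auto simp: lis_above_def inc_subseqs_above_def)

lemma strict_mono_on_insert_least:
  fixes w :: "'a::linorder \<Rightarrow> 'b::order"
  assumes "strict_mono_on S w" and "\<And>i. i \<in> S \<Longrightarrow> j < i \<and> w j < w i"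
  shows "strict_mono_on (insert j S) w"
  using assms(1) unfolding strict_mono_on_def monotone_on_def by (auto dest: assms(2))

lemma insert_inc_subseqs_above:
  assumes "j \<le> n"
  shows "insert j ` inc_subseqs_above n w (Suc j) (w j) =
    {S. S \<subseteq> {j..n} \<and> strict_mono_on S w \<and> j \<in> S}"
proof (intro set_eqI iffI)
  fix S assume "S \<in> insert j ` inc_subseqs_above n w (Suc j) (w j)"
  then obtain S' where S: "S = insert j S'" and S': "S' \<in> inc_subseqs_above n w (Suc j) (w j)"
    by blast
  have "strict_mono_on S w"
    unfolding S using S' by (intro strict_mono_on_insert_least) (auto simp: inc_subseqs_above_def)
  then show "S \<in> {S. S \<subseteq> {j..n} \<and> strict_mono_on S w \<and> j \<in> S}"
    using S S' assms by (auto simp: inc_subseqs_above_def)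
next
  fix S assume S: "S \<in> {S. S \<subseteq> {j..n} \<and> strict_mono_on S w \<and> j \<in> S}"
  have "j < i \<and> w j < w i" if "i \<in> S - {j}" for i
  proof -
    have "j < i" using S that by fastforce
    then show ?thesis using S that strict_mono_onD[of S w j i] by simp
  qed
  then have "S - {j} \<in> inc_subseqs_above n w (Suc j) (w j)"
    using S by (auto simp: inc_subseqs_above_def Suc_le_eq intro: monotone_on_subset[of S])
  moreover have "S = insert j (S - {j})" using S by auto
  ultimately show "S \<in> insert j ` inc_subseqs_above n w (Suc j) (w j)" by blast
qed

lemma inc_subseqs_above_Suc:
  assumes "j \<le> n"
  shows "inc_subseqs_above n w j t = inc_subseqs_above n w (Suc j) t \<union>
    (if t < w j then insert j ` inc_subseqs_above n w (Suc j) (w j) else {})"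
proof -
  have "{j..n} - {j} = {Suc j..n}" by auto
  then have without_j: "{S \<in> inc_subseqs_above n w j t. j \<notin> S} = inc_subseqs_above n w (Suc j) t"
    unfolding inc_subseqs_above_def by blast
  have "(\<forall>i\<in>S. t < w i) \<longleftrightarrow> t < w j" if "S \<subseteq> {j..n}" "strict_mono_on S w" "j \<in> S" for S
  proof
    assume "t < w j"
    moreover have "w j \<le> w i" if "i \<in> S" for i
      using strict_mono_on_leD[of S w j i] \<open>S \<subseteq> {j..n}\<close> \<open>strict_mono_on S w\<close> \<open>j \<in> S\<close> that
      by auto
    ultimately show "\<forall>i\<in>S. t < w i" by (meson less_le_trans)
  qed (use \<open>j \<in> S\<close> in blast)
  then have with_j: "{S \<in> inc_subseqs_above n w j t. j \<in> S} =
      (if t < w j then {S. S \<subseteq> {j..n} \<and> strict_mono_on S w \<and> j \<in> S} else {})"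
    unfolding inc_subseqs_above_def by auto
  show ?thesis
    unfolding insert_inc_subseqs_above[OF assms] with_j[symmetric] without_j[symmetric] by blast
qed

lemma Max_card_insert_inc_subseqs_above:
  "Max (card ` insert j ` inc_subseqs_above n w (Suc j) t) = Suc (lis_above n w (Suc j) t)"
proof -
  have "card (insert j S) = Suc (card S)" if "S \<in> inc_subseqs_above n w (Suc j) t" for S
  proof -
    have "S \<subseteq> {Suc j..n}" using that by (simp add: inc_subseqs_above_def)
    then have "finite S" "j \<notin> S" by (auto intro: finite_subset)
    then show ?thesis by simp
  qed
  then have "card ` insert j ` inc_subseqs_above n w (Suc j) t =
      Suc ` card ` inc_subseqs_above n w (Suc j) t"
    by (force simp: image_image intro: image_cong)
  then show ?thesis
    unfolding lis_above_def
    using finite_inc_subseqs_above inc_subseqs_above_nonempty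
    by (auto simp: mono_Max_commute[OF mono_Suc])
qed

lemma lis_above_Suc:
  assumes "j \<le> n"
  shows "lis_above n w j t = (if w j \<le> t then lis_above n w (Suc j) t
    else max (lis_above n w (Suc j) t) (Suc (lis_above n w (Suc j) (w j))))"
proof (cases "w j \<le> t")
  case True
  then show ?thesis by (simp add: lis_above_def inc_subseqs_above_Suc[OF assms])
next
  case False
  then have "lis_above n w j t = Max (card ` inc_subseqs_above n w (Suc j) t \<union>
      card ` insert j ` inc_subseqs_above n w (Suc j) (w j))"
    by (simp add: lis_above_def inc_subseqs_above_Suc[OF assms] image_Un)
  also have "\<dots> = max (Max (card ` inc_subseqs_above n w (Suc j) t))
      (Max (card ` insert j ` inc_subseqs_above n w (Suc j) (w j)))"
    using finite_inc_subseqs_above inc_subseqs_above_nonempty by (intro Max_Un) auto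
  also have "\<dots> = max (lis_above n w (Suc j) t) (Suc (lis_above n w (Suc j) (w j)))"
    by (simp only: Max_card_insert_inc_subseqs_above lis_above_def)
  finally show ?thesis using False by simp
qed

lemma LIS_eq_Suc_lis_above:
  assumes "inj w" "1 \<le> i" "i \<le> n"
  shows "LIS n w (w i) = Suc (lis_above n w (Suc i) (w i))"
proof -
  have "inc_subseqs_from n w (w i) = {S. S \<subseteq> {i..n} \<and> strict_mono_on S w \<and> i \<in> S}"
    using assms by (auto simp: inc_subseqs_from_def inj_eq intro!: bexI[of _ i])
  also have "\<dots> = insert i ` inc_subseqs_above n w (Suc i) (w i)"
    using insert_inc_subseqs_above[OF assms(3)] by simp
  finally show ?thesis
    unfolding LIS_def by (simp only: Max_card_insert_inc_subseqs_above)
qed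

definition snow_state :: "(nat \<times> nat) set \<Rightarrow> nat \<Rightarrow> nat \<Rightarrow> nat set \<times> (nat \<times> nat) set" where
  "snow_state D n j = foldl (snow_row D) ({}, {}) (rev [j..<Suc n])"

lemma snow_state_beyond: "n < j \<Longrightarrow> snow_state D n j = ({}, {})"
  by (simp add: snow_state_def)

lemma snow_state_step:
  assumes "j \<le> n"
  shows "snow_state D n j = snow_row D (snow_state D n (Suc j)) j"
proof -
  have "[j..<Suc n] = j # [Suc j..<Suc n]" using assms by (simp add: upt_conv_Cons)
  then show ?thesis by (simp add: snow_state_def)
qed

lemma snow_row_no_candidate:
  "{c. (r, c) \<in> D \<and> c \<notin> fst s} = {} \<Longrightarrow> snow_row D s r = s"
  by (simp add: snow_row_def)

lemma snow_row_candidate: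
  assumes "{c. (r, c) \<in> D \<and> c \<notin> fst s} \<noteq> {}"
  shows "snow_row D s r = (insert (Max {c. (r, c) \<in> D \<and> c \<notin> fst s}) (fst s),
    snd s \<union> {(r', Max {c. (r, c) \<in> D \<and> c \<notin> fst s}) | r'.
      1 \<le> r' \<and> r' < r \<and> (r', Max {c. (r, c) \<in> D \<and> c \<notin> fst s}) \<notin> D})"
  using assms unfolding snow_row_def Let_def by (simp only: if_False prod.collapse)

lemma snowflakes_eq_snow_state:
  assumes "finite D" and "D \<subseteq> {..n} \<times> UNIV"
  shows "snowflakes D = snd (snow_state D n 1)"
proof -
  define m where "m = Max (insert 0 (fst ` D))"
  have fin: "finite (insert 0 (fst ` D))" using assms(1) by simp
  have "m \<le> n" unfolding m_def using fin assms(2) by (subst Max_le_iff) auto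
  then have split: "[1..<Suc n] = [1..<Suc m] @ [Suc m..<Suc n]"
    using upt_add_eq_append[of 1 "Suc m" "n - m"] by simp
  have skip_row: "snow_row D s r = s" if "m < r" for s r
  proof (rule snow_row_no_candidate)
    have "r' \<le> m" if "(r', c) \<in> D" for r' c
      unfolding m_def using fin that by (intro Max_ge) force+
    then show "{c. (r, c) \<in> D \<and> c \<notin> fst s} = {}" using \<open>m < r\<close> by fastforce
  qed
  have skip_list: "foldl (snow_row D) s xs = s" if "set xs \<subseteq> {m<..}" for xs s
    using that by (induction xs arbitrary: s) (simp_all add: skip_row)
  have skip_rows: "foldl (snow_row D) s (rev [Suc m..<Suc n]) = s" for s
    by (rule skip_list) auto
  have "snowflakes D = snd (foldl (snow_row D) ({}, {}) (rev [1..<Suc m]))"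
    by (simp only: snowflakes_def m_def)
  also have "\<dots> = snd (snow_state D n 1)"
    unfolding snow_state_def split rev_append foldl_append skip_rows ..
  finally show ?thesis .
qed

lemma snowflake_iff_snow_state:
  assumes "j \<le> Suc n"
  shows "(r, c) \<in> snd (snow_state D n j) \<longleftrightarrow>
    1 \<le> r \<and> (r, c) \<notin> D \<and> c \<in> fst (snow_state D n (max j (Suc r)))"
  using assms
proof (induction j arbitrary: r c rule: inc_induct)
  case base
  then show ?case by (simp add: snow_state_beyond)
next
  case (step m)
  let ?cand = "{c. (m, c) \<in> D \<and> c \<notin> fst (snow_state D n (Suc m))}"
  have step_eq: "snow_state D n m = snow_row D (snow_state D n (Suc m)) m"
    using step by (simp add: snow_state_step)
  have max_Suc: "max m (Suc r) = (if r < m then m else Suc r)"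
    "max (Suc m) (Suc r) = (if r < m then Suc m else Suc r)" by auto
  show ?case
  proof (cases "?cand = {}")
    case True
    then have "snow_state D n m = snow_state D n (Suc m)"
      using step_eq by (simp add: snow_row_no_candidate)
    then show ?thesis using step.IH[of r c] by (simp add: max_Suc)
  next
    case False
    show ?thesis
      using step.IH[of r c] trans[OF step_eq snow_row_candidate[OF False]]
      by (auto simp: max_Suc)
  qed
qed

lemma row_of_snow:
  assumes "finite D" and "D \<subseteq> {..n} \<times> UNIV" and "1 \<le> i"
  shows "{c. (i, c) \<in> snow D} = {c. (i, c) \<in> D} \<union> fst (snow_state D n (Suc i))"
proof -
  have "(i, c) \<in> snowflakes D \<longleftrightarrow> (i, c) \<notin> D \<and> c \<in> fst (snow_state D n (Suc i))" for c
    using snowflake_iff_snow_state[where j = 1 and n = n and D = D and r = i and c = c] assms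
    by (simp add: snowflakes_eq_snow_state)
  then show ?thesis unfolding snow_def by blast
qed

lemma rothe_diagram_iff:
  "(r, c) \<in> rothe_diagram n w \<longleftrightarrow> 1 \<le> r \<and> (\<exists>s. r < s \<and> s \<le> n \<and> w s < w r \<and> c = w s)"
  unfolding rothe_diagram_def Inv_def by auto

lemma finite_rothe_diagram: "finite (rothe_diagram n w)"
  by (rule finite_subset[of _ "{..n} \<times> w ` {..n}"]) (auto simp: rothe_diagram_iff)

lemma rothe_diagram_rows: "rothe_diagram n w \<subseteq> {..n} \<times> UNIV"
  by (auto simp: rothe_diagram_iff)

lemma rothe_diagram_row:
  assumes "1 \<le> i"
  shows "{c. (i, c) \<in> rothe_diagram n w} = {v \<in> w ` {Suc i..n}. v < w i}"
  using assms by (auto simp: rothe_diagram_iff Suc_le_eq)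

lemma rothe_clouds_subset:
  assumes "1 \<le> j"
  shows "fst (snow_state (rothe_diagram n w) n j) \<subseteq> w ` {j..n}"
proof (cases "j \<le> Suc n")
  case True
  then show ?thesis using assms
  proof (induction j rule: inc_induct)
    case base
    then show ?case by (simp add: snow_state_beyond)
  next
    case (step m)
    let ?D = "rothe_diagram n w" and ?C = "fst (snow_state (rothe_diagram n w) n (Suc m))"
    let ?cand = "{c. (m, c) \<in> ?D \<and> c \<notin> ?C}"
    have step_eq: "snow_state ?D n m = snow_row ?D (snow_state ?D n (Suc m)) m"
      using step by (simp add: snow_state_step)
    have C: "?C \<subseteq> w ` {m..n}" using step by force
    show ?case
    proof (cases "?cand = {}")
      case True
      then show ?thesis using C step_eq by (simp add: snow_row_no_candidate)
    next
      case False
      have sub: "?cand \<subseteq> w ` {Suc m..n}" using rothe_diagram_row[OF step.prems] by blast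
      then have "finite ?cand" by (rule finite_subset) simp
      then have "Max ?cand \<in> w ` {Suc m..n}" using Max_in False sub by blast
      then have "Max ?cand \<in> w ` {m..n}" by auto
      then show ?thesis using C trans[OF step_eq snow_row_candidate[OF False]] by simp
    qed
  qed
qed (simp add: snow_state_beyond)

lemma rothe_free_columns_step:
  assumes "inj w" and "1 \<le> j" and "j \<le> n"
  defines "D \<equiv> rothe_diagram n w"
  shows "w ` {j..n} - fst (snow_state D n j) =
    bump_below (w ` {Suc j..n} - fst (snow_state D n (Suc j))) (w j)"
proof -
  let ?W = "w ` {Suc j..n}" and ?C = "fst (snow_state D n (Suc j))"
  let ?cand = "{c. (j, c) \<in> D \<and> c \<notin> ?C}"
  have step_eq: "snow_state D n j = snow_row D (snow_state D n (Suc j)) j"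
    using assms by (simp add: snow_state_step)
  have "(j, c) \<in> D \<longleftrightarrow> c \<in> ?W \<and> c < w j" for c
    using rothe_diagram_row[OF assms(2), of n w] unfolding D_def by blast
  then have cand: "?cand = {v \<in> ?W - ?C. v < w j}" by auto
  have "w ` {j..n} = insert (w j) ?W"
    using assms(3) by (simp add: Icc_eq_insert_lb_nat)
  moreover have "w j \<notin> ?W" using assms(1) by (auto simp: inj_eq)
  moreover have "?C \<subseteq> ?W" unfolding D_def by (rule rothe_clouds_subset) simp
  ultimately have free: "w ` {j..n} - ?C = insert (w j) (?W - ?C)" by blast
  show ?thesis
  proof (cases "?cand = {}")
    case True
    then have "snow_state D n j = snow_state D n (Suc j)"
      using step_eq by (simp add: snow_row_no_candidate)
    then show ?thesis using free True unfolding cand bump_below_def by simp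
  next
    case False
    have "fst (snow_state D n j) = insert (Max ?cand) ?C"
      using trans[OF step_eq snow_row_candidate[OF False]] by simp
    moreover have "Max ?cand < w j"
      using Max_in[of ?cand] False unfolding cand by auto
    ultimately have "w ` {j..n} - fst (snow_state D n j) = insert (w j) (?W - ?C) - {Max ?cand}"
      using free by auto
    then show ?thesis unfolding bump_below_def cand[symmetric] by (simp only: if_not_P[OF False])
  qed
qed

lemma card_above_rothe_free_columns:
  assumes "inj w" and "1 \<le> j"
  shows "card {v \<in> w ` {j..n} - fst (snow_state (rothe_diagram n w) n j). t < v} = lis_above n w j t"
proof (cases "j \<le> Suc n")
  case True
  then show ?thesis using assms(2)
  proof (induction j arbitrary: t rule: inc_induct)
    case base
    then show ?case by (simp add: snow_state_beyond lis_above_beyond)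
  next
    case (step m)
    let ?V = "w ` {Suc m..n} - fst (snow_state (rothe_diagram n w) n (Suc m))"
    have "w m \<notin> ?V" using assms(1) by (auto simp: inj_eq)
    then show ?case
      using step.IH step.prems step.hyps
      by (simp add: rothe_free_columns_step[OF assms(1)] card_above_bump_below lis_above_Suc)
  qed
qed (simp add: snow_state_beyond lis_above_beyond)

(* The row index i may exceed n; both sides are then 0 by truncated subtraction. *)
lemma rajcode_diag_rothe_diagram:
  assumes "inj w" and "1 \<le> i"
  shows "rajcode_diag (rothe_diagram n w) i = n - i - lis_above n w (Suc i) (w i)"
proof -
  let ?W = "w ` {Suc i..n}" and ?C = "fst (snow_state (rothe_diagram n w) n (Suc i))"
  let ?above = "{v \<in> ?W - ?C. w i < v}"
  have "?C \<subseteq> ?W" by (rule rothe_clouds_subset) simp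
  have row: "{v \<in> ?W. v < w i} \<union> ?C = ?W - ?above"
  proof (intro set_eqI iffI)
    fix v assume v: "v \<in> ?W - ?above"
    have "v \<noteq> w i" using v assms(1) by (auto simp: inj_eq)
    then show "v \<in> {v \<in> ?W. v < w i} \<union> ?C" using v by auto
  qed (use \<open>?C \<subseteq> ?W\<close> in auto)
  have "card ?W = n - i"
    using card_image[OF inj_on_subset[OF assms(1) subset_UNIV]] by simp
  have "rajcode_diag (rothe_diagram n w) i = card (?W - ?above)"
    unfolding rajcode_diag_def row_of_snow[OF finite_rothe_diagram rothe_diagram_rows assms(2)]
      rothe_diagram_row[OF assms(2)] row ..
  also have "\<dots> = card ?W - card ?above" by (rule card_Diff_subset) auto
  also have "\<dots> = n - i - lis_above n w (Suc i) (w i)"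
    using card_above_rothe_free_columns[OF assms(1), of "Suc i"] \<open>card ?W = n - i\<close> by simp
  finally show ?thesis .
qed

lemma rajcode_perm_eq_lis_above:
  assumes "inj w" and "1 \<le> i"
  shows "rajcode_perm n w i = n - i - lis_above n w (Suc i) (w i)"
proof (cases "i \<le> n")
  case True
  then show ?thesis using assms(2) LIS_eq_Suc_lis_above[OF assms True] by (simp add: rajcode_perm_def)
qed (simp add: rajcode_perm_def)

theorem theorem5p5:
  fixes n :: nat and w :: "nat \<Rightarrow> nat"
  assumes "w permutes {1..n}"
  shows "\<forall>i\<ge>1. rajcode_perm n w i = rajcode_diag (rothe_diagram n w) i"
proof (intro allI impI)
  fix i :: nat
  assume "1 \<le> i"
  with permutes_inj[OF assms] show "rajcode_perm n w i = rajcode_diag (rothe_diagram n w) i"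
    by (simp add: rajcode_perm_eq_lis_above rajcode_diag_rothe_diagram)
qed

end
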